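(* Let $\{n_k\}_{k\ge1}\subset\mathbb{Z}^+$ and $\{c_k\}_{k\ge1}\subset\mathbb{R}^+$ satisfy $n_k\ge 2$ and $n_kc_k<1$ for all $k\ge1$, let $I\subset\mathbb{R}$ be a nonempty closed interval, and let $E\in\mathcal{M}(I,\{n_k\},\{c_k\})$ be a homogeneous Moran set. If $\sup_{k\ge1}n_k<+\infty$, then $$\dim_L E\le\liminf_{l\to+\infty}\ \inf_{k\ge1}\ \frac{\log (n_{k+1}\cdots n_{k+l})}{-\log (c_{k+1}\cdots c_{k+l})}.$$
   Context: Words: $\Omega_0=\{\emptyset\}$, $\Omega_k=\{\sigma_1\cdots\sigma_k:1\le\sigma_j\le n_j\}$, $\Omega=\bigcup_{k\ge0}\Omega_k$; for $\sigma\in\Omega_{k-1}$ and $1\le i\le n_k$, $\sigma*i\in\Omega_k$ denotes concatenation. A collection $\{I_\sigma:\sigma\in\Omega\}$ of closed intervals is a homogeneous Moran structure if $I_\emptyset=I$; for each $k\ge1$ and $\sigma\in\Omega_{k-1}$, the intervals $I_{\sigma*1},\dots,I_{\sigma*n_k}$ are contained in $I_\sigma$ and have pairwise disjoint interiors; and $|I_{\sigma*i}|/|I_\sigma|=c_k$ for all such $\sigma,i$ ($|\cdot|$ = diameter). The set $E=\bigcap_{k\ge1}\bigcup_{\sigma\in\Omega_k}I_\sigma$ is a homogeneous Moran set, and $\mathcal{M}(I,\{n_k\},\{c_k\})$ is the class of all such sets. For $F\subset\mathbb{R}$, $N_r(A)$ is the smallest number of balls of radius $r$ covering $A$, and the lower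 dimension is $\dim_L F=\sup\{s\ge0:\exists\, b,c>0\ \forall\, 0<r<R<b,\ \forall x\in F,\ N_r(B(x,R)\cap F)\ge c(R/r)^s\}$. *)

theory Defs
  imports "HOL-Analysis.Analysis"
begin

text \<open>Words of length k: lists sigma with 1 <= sigma!j <= n (j+1) for j < k
  (list position j corresponds to the paper's index j+1).\<close>
definition words :: "(nat \<Rightarrow> nat) \<Rightarrow> nat \<Rightarrow> nat list set" where
  "words n k = {\<sigma>. length \<sigma> = k \<and> (\<forall>j<k. 1 \<le> \<sigma> ! j \<and> \<sigma> ! j \<le> n (Suc j))}"

definition is_closed_interval :: "real set \<Rightarrow> bool" where
  "is_closed_interval S \<longleftrightarrow> (\<exists>a b. a \<le> b \<and> S = {a..b})"

text \<open>Homogeneous Moran structure; concatenation sigma*i is sigma @ [i].\<close>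
definition homog_moran_structure ::
  "real set \<Rightarrow> (nat \<Rightarrow> nat) \<Rightarrow> (nat \<Rightarrow> real) \<Rightarrow> (nat list \<Rightarrow> real set) \<Rightarrow> bool" where
  "homog_moran_structure I n c J \<longleftrightarrow>
     J [] = I \<and>
     (\<forall>k. \<forall>\<sigma>\<in>words n k. is_closed_interval (J \<sigma>)) \<and>
     (\<forall>m. \<forall>\<sigma>\<in>words n m.
        (\<forall>i\<in>{1..n (Suc m)}. J (\<sigma> @ [i]) \<subseteq> J \<sigma> \<and>
            diameter (J (\<sigma> @ [i])) / diameter (J \<sigma>) = c (Suc m)) \<and>
        (\<forall>i\<in>{1..n (Suc m)}. \<forall>j\<in>{1..n (Suc m)}. i \<noteq> j \<longrightarrow>
            interior (J (\<sigma> @ [i])) \<inter> interior (J (\<sigma> @ [j])) = {}))"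

definition moran_set :: "(nat \<Rightarrow> nat) \<Rightarrow> (nat list \<Rightarrow> real set) \<Rightarrow> real set" where
  "moran_set n J = (\<Inter>k\<in>{1..}. \<Union>\<sigma>\<in>words n k. J \<sigma>)"

definition moran_class :: "real set \<Rightarrow> (nat \<Rightarrow> nat) \<Rightarrow> (nat \<Rightarrow> real) \<Rightarrow> real set set" where
  "moran_class I n c = {E. \<exists>J. homog_moran_structure I n c J \<and> E = moran_set n J}"

definition covering_number :: "real \<Rightarrow> real set \<Rightarrow> nat" where
  "covering_number r A = (LEAST N. \<exists>C. finite C \<and> card C = N \<and> A \<subseteq> (\<Union>x\<in>C. ball x r))"

definition lower_dim :: "real set \<Rightarrow> ereal" where
  "lower_dim F = Sup (ereal ` {s. s \<ge> 0 \<and> (\<exists>b>0. \<exists>C>0. \<forall>r R. 0 < r \<longrightarrow> r < R \<longrightarrow> R < b \<longrightarrow>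
      (\<forall>x\<in>F. real (covering_number r (ball x R \<inter> F)) \<ge> C * (R / r) powr s))})"

end

theory Submission
  imports Defs
begin

text \<open>
  Fix a point x of E and scales R = D_k and r = D_(k+l), where D_k = |I| c_1 \<cdots> c_k is the common
  length of the level-k intervals. Disjointness of interiors lets at most 4 level-k intervals meet
  B(x, R), and each of them contains n_(k+1) \<cdots> n_(k+l) level-(k+l) intervals, every one of which
  lies in a ball of radius r. Hence N_r(B(x, R) \<inter> E) \<le> 4 n_(k+1) \<cdots> n_(k+l), and the
  lower-dimension condition C (R/r)^s \<le> N_r(B(x, R) \<inter> E) becomes, after taking logarithms,
  s \<Sigma> -log c_j \<le> \<Sigma> log n_j + log (4/C) over every window k < j \<le> k + l with k large.
  Since -log c_j > log 2, dividing by the window length l turns the additive constant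
  (and the finitely many small k) into an error of order 1/l, which vanishes in the liminf.
\<close>

lemma ln_prod_window:
  fixes f :: "nat \<Rightarrow> real"
  assumes "\<And>j. j \<ge> 1 \<Longrightarrow> f j > 0"
  shows "ln (\<Prod>j\<in>{k+1..k+l}. f j) = (\<Sum>j\<in>{k+1..k+l}. ln (f j))"
proof (rule ln_prod)
  show "f j \<noteq> 0" if "j \<in> {k+1..k+l}" for j
    using assms[of j] that by simp
qed simp

lemma window_sum_bound_all_starts:
  fixes a b :: "nat \<Rightarrow> real"
  assumes a_nonneg: "\<And>j. j \<ge> 1 \<Longrightarrow> a j \<ge> 0" and b_nonneg: "\<And>j. j \<ge> 1 \<Longrightarrow> b j \<ge> 0"
    and s: "s \<ge> 0"
    and bound: "\<And>k m. k \<ge> K \<Longrightarrow> m \<ge> 1 \<Longrightarrow>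
      s * (\<Sum>j\<in>{k+1..k+m}. b j) \<le> (\<Sum>j\<in>{k+1..k+m}. a j) + Q"
    and k: "k \<ge> 1" and l: "l \<ge> max K 1"
  shows "s * (\<Sum>j\<in>{k+1..k+l}. b j) \<le> (\<Sum>j\<in>{k+1..k+l}. a j) + (s * (\<Sum>j\<in>{1..K}. b j) + \<bar>Q\<bar>)"
proof -
  define k' where "k' = max k K"
  define m where "m = k + l - k'"
  have m: "m \<ge> 1" "k' + m = k + l" "k + 1 \<le> k' + 1"
    unfolding m_def k'_def using k l by auto
  have split: "(\<Sum>j\<in>{k+1..k+l}. f j) = (\<Sum>j\<in>{k+1..k'}. f j) + (\<Sum>j\<in>{k'+1..k'+m}. f j)"
    for f :: "nat \<Rightarrow> real"
    using sum.ub_add_nat[OF m(3), of f m] m(2) by simp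
  have head_b: "(\<Sum>j\<in>{k+1..k'}. b j) \<le> (\<Sum>j\<in>{1..K}. b j)"
    by (rule sum_mono2) (use b_nonneg in \<open>auto simp: k'_def\<close>)
  have head_a: "(\<Sum>j\<in>{k+1..k'}. a j) \<ge> 0"
    by (rule sum_nonneg) (use a_nonneg in auto)
  have tail: "s * (\<Sum>j\<in>{k'+1..k'+m}. b j) \<le> (\<Sum>j\<in>{k'+1..k'+m}. a j) + Q"
    by (rule bound) (use m in \<open>auto simp: k'_def\<close>)
  show ?thesis
    using mult_left_mono[OF head_b s] head_a tail unfolding split[of a] split[of b]
    by (simp add: distrib_left)
qed

lemma liminf_window_ratio_ge:
  fixes a b :: "nat \<Rightarrow> real"
  assumes a_nonneg: "\<And>j. j \<ge> 1 \<Longrightarrow> a j \<ge> 0" and b_ge: "\<And>j. j \<ge> 1 \<Longrightarrow> b j \<ge> \<beta>"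
    and \<beta>: "\<beta> > 0" and s: "s \<ge> 0"
    and bound: "\<And>k m. k \<ge> K \<Longrightarrow> m \<ge> 1 \<Longrightarrow>
      s * (\<Sum>j\<in>{k+1..k+m}. b j) \<le> (\<Sum>j\<in>{k+1..k+m}. a j) + Q"
  shows "ereal s \<le> liminf (\<lambda>l. INF k\<in>{1..}.
           ereal ((\<Sum>j\<in>{k+1..k+l}. a j) / (\<Sum>j\<in>{k+1..k+l}. b j)))"
proof -
  define M where "M = s * (\<Sum>j\<in>{1..K}. b j) + \<bar>Q\<bar>"
  have M: "M \<ge> 0"
    unfolding M_def using s b_ge \<beta> by (intro add_nonneg_nonneg mult_nonneg_nonneg sum_nonneg) force+
  have ratio_ge: "s - M / (real l * \<beta>) \<le> (\<Sum>j\<in>{k+1..k+l}. a j) / (\<Sum>j\<in>{k+1..k+l}. b j)"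
    if k: "k \<ge> 1" and l: "l \<ge> max K 1" for k l
  proof -
    define B where "B = (\<Sum>j\<in>{k+1..k+l}. b j)"
    have "real l * \<beta> \<le> B"
      unfolding B_def using sum_mono[of "{k+1..k+l}" "\<lambda>_. \<beta>" b] b_ge by simp
    moreover have "real l * \<beta> > 0" using l \<beta> by simp
    ultimately have "M / B \<le> M / (real l * \<beta>)" and B: "B > 0"
      using M by (auto intro: divide_left_mono)
    moreover have "s * B \<le> (\<Sum>j\<in>{k+1..k+l}. a j) + M"
      unfolding B_def M_def
      by (rule window_sum_bound_all_starts[OF a_nonneg _ s bound k l]) (use b_ge \<beta> in force)+
    ultimately show ?thesis
      unfolding B_def[symmetric] using B by (simp add: field_simps)
  qed
  have "(\<lambda>l. s - M / \<beta> * (1 / real l)) \<longlonglongrightarrow> s - M / \<beta> * 0"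
    by (intro tendsto_intros lim_inverse_n')
  then have "(\<lambda>l. ereal (s - M / (real l * \<beta>))) \<longlonglongrightarrow> ereal s"
    by (simp add: mult.commute)
  then have "ereal s = liminf (\<lambda>l. ereal (s - M / (real l * \<beta>)))"
    by (rule lim_imp_Liminf[symmetric, OF trivial_limit_sequentially])
  also have "\<dots> \<le> liminf (\<lambda>l. INF k\<in>{1..}.
                   ereal ((\<Sum>j\<in>{k+1..k+l}. a j) / (\<Sum>j\<in>{k+1..k+l}. b j)))"
    by (intro Liminf_mono eventually_sequentiallyI[of "max K 1"] INF_greatest)
       (use ratio_ge in auto)
  finally show ?thesis .
qed

lemma card_separated_le:
  fixes S :: "real set"
  assumes R: "R > 0" and separated: "\<And>x y. x \<in> S \<Longrightarrow> y \<in> S \<Longrightarrow> x \<noteq> y \<Longrightarrow> R \<le> \<bar>x - y\<bar>"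
    and S: "S \<subseteq> {a..a + real m * R}"
  shows "card S \<le> Suc m"
proof -
  define f where "f x = \<lfloor>(x - a) / R\<rfloor>" for x
  have "inj_on f S"
  proof (rule inj_onI, rule ccontr)
    fix x y assume xy: "x \<in> S" "y \<in> S" "f x = f y" "x \<noteq> y"
    have "\<bar>(x - a) / R - (y - a) / R\<bar> < 1"
      using xy(3) unfolding f_def by linarith
    then have "\<bar>x - y\<bar> < R"
      using R by (simp add: diff_divide_distrib[symmetric] abs_divide)
    then show False using separated[OF xy(1,2,4)] by simp
  qed
  moreover have "f ` S \<subseteq> {0..int m}"
  proof
    fix z assume "z \<in> f ` S"
    then obtain x where "x \<in> S" "z = f x" by blast
    moreover have "0 \<le> (x - a) / R" "(x - a) / R \<le> real m" if "x \<in> S"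
      using S that R by (auto simp: field_simps)
    ultimately show "z \<in> {0..int m}" unfolding f_def by (simp add: le_floor_iff floor_le_iff)
  qed
  ultimately have "card S \<le> card {0..int m}"
    by (metis card_image card_mono finite_atLeastAtMost_int)
  then show ?thesis by simp
qed

lemma covering_number_le_card:
  "finite C \<Longrightarrow> A \<subseteq> (\<Union>x\<in>C. ball x r) \<Longrightarrow> covering_number r A \<le> card C"
  unfolding covering_number_def by (rule Least_le) blast

lemma words_0: "words n 0 = {[]}"
  by (auto simp: words_def)

lemma words_length: "\<sigma> \<in> words n k \<Longrightarrow> length \<sigma> = k"
  by (simp add: words_def)

lemma words_Suc_iff:
  "\<tau> \<in> words n (Suc k) \<longleftrightarrow> (\<exists>\<sigma> i. \<tau> = \<sigma> @ [i] \<and> \<sigma> \<in> words n k \<and> i \<in> {1..n (Suc k)})"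
proof
  assume \<tau>: "\<tau> \<in> words n (Suc k)"
  then obtain \<sigma> i where \<tau>_eq: "\<tau> = \<sigma> @ [i]"
    by (cases \<tau> rule: rev_cases) (auto simp: words_def)
  have length_\<sigma>: "length \<sigma> = k"
    using \<tau> \<tau>_eq words_length by fastforce
  have entries: "1 \<le> \<tau> ! j \<and> \<tau> ! j \<le> n (Suc j)" if "j < Suc k" for j
    using \<tau> that by (simp add: words_def)
  have "\<sigma> ! j = \<tau> ! j" if "j < k" for j
    using that \<tau>_eq length_\<sigma> by (simp add: nth_append_left)
  then have "\<sigma> \<in> words n k"
    using entries length_\<sigma> by (auto simp: words_def)
  moreover have "i = \<tau> ! k"
    using \<tau>_eq length_\<sigma> by auto
  then have "i \<in> {1..n (Suc k)}"
    using entries[of k] by simp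
  ultimately show "\<exists>\<sigma> i. \<tau> = \<sigma> @ [i] \<and> \<sigma> \<in> words n k \<and> i \<in> {1..n (Suc k)}"
    using \<tau>_eq by blast
next
  assume "\<exists>\<sigma> i. \<tau> = \<sigma> @ [i] \<and> \<sigma> \<in> words n k \<and> i \<in> {1..n (Suc k)}"
  then show "\<tau> \<in> words n (Suc k)"
    by (auto simp: words_def nth_append less_Suc_eq)
qed

lemma words_Suc: "words n (Suc k) = (\<lambda>(\<sigma>, i). \<sigma> @ [i]) ` (words n k \<times> {1..n (Suc k)})"
  unfolding set_eq_iff words_Suc_iff image_iff Bex_def by force

lemma finite_words: "finite (words n k)"
  by (induction k) (auto simp: words_0 words_Suc)

lemma take_in_words: "\<tau> \<in> words n (k + m) \<Longrightarrow> take k \<tau> \<in> words n k"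
  by (auto simp: words_def)

lemma card_words_extending_le:
  "card {\<tau> \<in> words n (k + m). take k \<tau> = \<sigma>} \<le> (\<Prod>j\<in>{k+1..k+m}. n j)"
proof (induction m)
  case 0
  have "{\<tau> \<in> words n k. take k \<tau> = \<sigma>} \<subseteq> {\<sigma>}"
    by (auto simp: words_def)
  then show ?case
    using card_mono[of "{\<sigma>}"] by fastforce
next
  case (Suc m)
  let ?ext = "\<lambda>m. {\<tau> \<in> words n (k + m). take k \<tau> = \<sigma>}"
  let ?snoc = "\<lambda>(\<rho>, i). \<rho> @ [i]"
  have "?ext (Suc m) \<subseteq> ?snoc ` (?ext m \<times> {1..n (k + Suc m)})"
  proof
    fix \<tau> assume "\<tau> \<in> ?ext (Suc m)"
    then obtain \<rho> i where \<tau>: "\<tau> = \<rho> @ [i]" "\<rho> \<in> words n (k + m)" "i \<in> {1..n (k + Suc m)}"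
      "take k \<tau> = \<sigma>"
      by (auto simp: words_Suc_iff)
    then have "take k \<rho> = \<sigma>"
      by (simp add: words_length)
    with \<tau> show "\<tau> \<in> ?snoc ` (?ext m \<times> {1..n (k + Suc m)})"
      by force
  qed
  then have "card (?ext (Suc m)) \<le> card (?snoc ` (?ext m \<times> {1..n (k + Suc m)}))"
    by (intro card_mono finite_imageI finite_SigmaI) (simp_all add: finite_words)
  also have "\<dots> \<le> card (?ext m \<times> {1..n (k + Suc m)})"
    by (rule card_image_le) (simp add: finite_words)
  also have "\<dots> \<le> (\<Prod>j\<in>{k+1..k+m}. n j) * n (k + Suc m)"
    using Suc.IH by (simp add: card_cartesian_product)
  finally show ?case
    by (simp add: prod.nat_ivl_Suc' mult.commute)
qed

lemma card_words_prefix_in_le: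
  assumes "finite W"
  shows "card {\<tau> \<in> words n (k + m). take k \<tau> \<in> W} \<le> card W * (\<Prod>j\<in>{k+1..k+m}. n j)"
proof -
  have "{\<tau> \<in> words n (k + m). take k \<tau> \<in> W} = (\<Union>\<sigma>\<in>W. {\<tau> \<in> words n (k + m). take k \<tau> = \<sigma>})"
    by blast
  then have "card {\<tau> \<in> words n (k + m). take k \<tau> \<in> W}
      \<le> (\<Sum>\<sigma>\<in>W. card {\<tau> \<in> words n (k + m). take k \<tau> = \<sigma>})"
    using assms by (simp add: card_UN_le)
  also have "\<dots> \<le> (\<Sum>\<sigma>\<in>W. \<Prod>j\<in>{k+1..k+m}. n j)"
    by (intro sum_mono card_words_extending_le)
  finally show ?thesis
    by simp
qed

lemma replicate_in_words: "(\<And>j. j \<ge> 1 \<Longrightarrow> n j \<ge> 1) \<Longrightarrow> replicate k 1 \<in> words n k"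
  by (auto simp: words_def)

lemma moran_set_in_level: "y \<in> moran_set n J \<Longrightarrow> k \<ge> 1 \<Longrightarrow> \<exists>\<sigma>\<in>words n k. y \<in> J \<sigma>"
  unfolding moran_set_def by auto

locale homog_moran =
  fixes I :: "real set" and n :: "nat \<Rightarrow> nat" and c :: "nat \<Rightarrow> real"
    and J :: "nat list \<Rightarrow> real set"
  assumes moran_structure: "homog_moran_structure I n c J"
    and n_ge: "\<And>k. k \<ge> 1 \<Longrightarrow> n k \<ge> 2"
    and c_pos: "\<And>k. k \<ge> 1 \<Longrightarrow> c k > 0"
    and nc_lt: "\<And>k. k \<ge> 1 \<Longrightarrow> real (n k) * c k < 1"
begin

definition level_diam :: "nat \<Rightarrow> real" where
  "level_diam k = diameter I * (\<Prod>j\<in>{1..k}. c j)"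

definition left_end :: "nat list \<Rightarrow> real" where
  "left_end \<sigma> = Inf (J \<sigma>)"

lemma J_Nil: "J [] = I"
  using moran_structure by (simp add: homog_moran_structure_def)

lemma J_closed_interval: "\<sigma> \<in> words n k \<Longrightarrow> \<exists>a b. a \<le> b \<and> J \<sigma> = {a..b}"
  using moran_structure by (auto simp: homog_moran_structure_def is_closed_interval_def)

lemma J_snoc_subset: "\<sigma> \<in> words n k \<Longrightarrow> i \<in> {1..n (Suc k)} \<Longrightarrow> J (\<sigma> @ [i]) \<subseteq> J \<sigma>"
  using moran_structure by (simp add: homog_moran_structure_def)

lemma diameter_J_snoc_ratio:
  "\<sigma> \<in> words n k \<Longrightarrow> i \<in> {1..n (Suc k)} \<Longrightarrow> diameter (J (\<sigma> @ [i])) / diameter (J \<sigma>) = c (Suc k)"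
  using moran_structure by (simp add: homog_moran_structure_def)

lemma interior_J_snoc_disjoint:
  "\<sigma> \<in> words n k \<Longrightarrow> i \<in> {1..n (Suc k)} \<Longrightarrow> j \<in> {1..n (Suc k)} \<Longrightarrow> i \<noteq> j \<Longrightarrow>
    interior (J (\<sigma> @ [i])) \<inter> interior (J (\<sigma> @ [j])) = {}"
  using moran_structure unfolding homog_moran_structure_def by blast

lemma c_less_half:
  assumes "k \<ge> 1"
  shows "c k < 1 / 2"
proof -
  have "2 * c k \<le> real (n k) * c k"
    using n_ge[OF assms] c_pos[OF assms] by (intro mult_right_mono) auto
  then show ?thesis
    using nc_lt[OF assms] by simp
qed

lemma diameter_I_pos: "diameter I > 0"
proof -
  have "(1::nat) \<in> {1..n (Suc 0)}"
    using n_ge[of 1] by simp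
  then have "diameter (J [1]) / diameter I = c 1"
    using diameter_J_snoc_ratio[of "[]" 0 1] by (simp add: words_0 J_Nil)
  then have "diameter I \<noteq> 0"
    \<comment> \<open>a zero diameter would make the quotient 0, not c_1 > 0\<close>
    using c_pos[of 1] by auto
  moreover obtain a b where "a \<le> b" "I = {a..b}"
    using J_closed_interval[of "[]" 0] by (auto simp: words_0 J_Nil)
  ultimately show ?thesis by simp
qed

lemma level_diam_pos: "level_diam k > 0"
  unfolding level_diam_def using diameter_I_pos by (intro mult_pos_pos prod_pos c_pos) auto

lemma level_diam_Suc: "level_diam (Suc k) = level_diam k * c (Suc k)"
  unfolding level_diam_def by (simp add: prod.cl_ivl_Suc)

lemma level_diam_add: "level_diam (k + l) = level_diam k * (\<Prod>j\<in>{k+1..k+l}. c j)"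
  unfolding level_diam_def using prod.ub_add_nat[of 1 k c l] by simp

lemma level_diam_Suc_less: "level_diam (Suc k) < level_diam k"
  using level_diam_Suc c_less_half[of "Suc k"] level_diam_pos[of k] by simp

lemma level_diam_less:
  assumes "k < k'"
  shows "level_diam k' < level_diam k"
proof -
  have "level_diam k' \<le> level_diam (Suc k)"
    by (rule lift_Suc_antimono_le[of level_diam, OF less_imp_le[OF level_diam_Suc_less]])
       (use assms in simp)
  then show ?thesis
    using level_diam_Suc_less[of k] by linarith
qed

lemma level_diam_le_pow: "level_diam k \<le> diameter I * (1 / 2) ^ k"
proof (induction k)
  case (Suc k)
  have "level_diam (Suc k) \<le> level_diam k * (1 / 2)"
    using level_diam_Suc c_less_half[of "Suc k"] level_diam_pos[of k] by simp
  with Suc show ?case by simp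
qed (simp add: level_diam_def)

lemma level_diam_eventually_less:
  assumes "b > 0"
  obtains K where "\<And>k. k \<ge> K \<Longrightarrow> level_diam k < b"
proof -
  obtain K where "(1 / 2) ^ K < b / diameter I"
    using real_arch_pow_inv[of "b / diameter I" "1 / 2"] assms diameter_I_pos by auto
  then have "diameter I * (1 / 2) ^ K < b"
    using diameter_I_pos by (simp add: pos_less_divide_eq mult.commute)
  then have "level_diam K < b"
    using level_diam_le_pow[of K] by linarith
  show ?thesis
  proof (rule that)
    fix k assume "k \<ge> K"
    then show "level_diam k < b"
      using \<open>level_diam K < b\<close> level_diam_less[of K k] by (cases "k = K") auto
  qed
qed

lemma diameter_J: "\<sigma> \<in> words n k \<Longrightarrow> diameter (J \<sigma>) = level_diam k"
proof (induction k arbitrary: \<sigma>)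
  case 0
  then show ?case by (simp add: words_0 J_Nil level_diam_def)
next
  case (Suc k)
  then obtain \<rho> i where \<sigma>: "\<sigma> = \<rho> @ [i]" "\<rho> \<in> words n k" "i \<in> {1..n (Suc k)}"
    by (auto simp: words_Suc_iff)
  then have "diameter (J \<sigma>) / level_diam k = c (Suc k)"
    using diameter_J_snoc_ratio[OF \<sigma>(2,3)] Suc.IH[OF \<sigma>(2)] \<sigma>(1) by simp
  then show ?case
    using level_diam_pos[of k] level_diam_Suc by (simp add: field_simps)
qed

lemma J_eq_interval:
  assumes "\<sigma> \<in> words n k"
  shows "J \<sigma> = {left_end \<sigma> .. left_end \<sigma> + level_diam k}"
proof -
  obtain a b where ab: "a \<le> b" "J \<sigma> = {a..b}"
    using J_closed_interval[OF assms] by blast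
  then have "b = a + level_diam k"
    using diameter_J[OF assms] by simp
  moreover have "left_end \<sigma> = a"
    using ab by (simp add: left_end_def)
  ultimately show ?thesis
    using ab by simp
qed

lemma J_subset_prefix: "\<tau> \<in> words n (k + m) \<Longrightarrow> J \<tau> \<subseteq> J (take k \<tau>)"
proof (induction m arbitrary: \<tau>)
  case (Suc m)
  then obtain \<rho> i where \<tau>: "\<tau> = \<rho> @ [i]" "\<rho> \<in> words n (k + m)" "i \<in> {1..n (Suc (k + m))}"
    by (auto simp: words_Suc_iff)
  then have "J \<tau> \<subseteq> J \<rho>"
    using J_snoc_subset by simp
  also have "\<dots> \<subseteq> J (take k \<tau>)"
    using Suc.IH[OF \<tau>(2)] \<tau>(1) words_length[OF \<tau>(2)] by simp
  finally show ?case .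
qed (simp add: words_length)

lemma interior_J_disjoint:
  "\<sigma> \<in> words n k \<Longrightarrow> \<tau> \<in> words n k \<Longrightarrow> \<sigma> \<noteq> \<tau> \<Longrightarrow> interior (J \<sigma>) \<inter> interior (J \<tau>) = {}"
proof (induction k arbitrary: \<sigma> \<tau>)
  case (Suc k)
  obtain \<rho> i where \<sigma>: "\<sigma> = \<rho> @ [i]" "\<rho> \<in> words n k" "i \<in> {1..n (Suc k)}"
    using Suc.prems by (auto simp: words_Suc_iff)
  obtain \<rho>' i' where \<tau>: "\<tau> = \<rho>' @ [i']" "\<rho>' \<in> words n k" "i' \<in> {1..n (Suc k)}"
    using Suc.prems by (auto simp: words_Suc_iff)
  show ?case
  proof (cases "\<rho> = \<rho>'")
    case True
    then show ?thesis
      using interior_J_snoc_disjoint[OF \<sigma>(2,3) \<tau>(3)] Suc.prems(3) \<sigma>(1) \<tau>(1) by auto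
  next
    case False
    have "interior (J \<sigma>) \<subseteq> interior (J \<rho>)" "interior (J \<tau>) \<subseteq> interior (J \<rho>')"
      using J_snoc_subset \<sigma> \<tau> by (simp_all add: interior_mono)
    then show ?thesis
      using Suc.IH[OF \<sigma>(2) \<tau>(2) False] by blast
  qed
qed (simp add: words_0)

lemma left_end_separated:
  assumes "\<sigma> \<in> words n k" "\<tau> \<in> words n k" "\<sigma> \<noteq> \<tau>"
  shows "level_diam k \<le> \<bar>left_end \<sigma> - left_end \<tau>\<bar>"
proof -
  define a a' d where "a = left_end \<sigma>" and "a' = left_end \<tau>" and "d = level_diam k"
  have interiors: "interior (J \<sigma>) = {a<..<a + d}" "interior (J \<tau>) = {a'<..<a' + d}"
    using J_eq_interval assms unfolding a_def a'_def d_def by simp_all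
  show ?thesis
  proof (rule ccontr)
    assume "\<not> ?thesis"
    then have "\<bar>a - a'\<bar> < d"
      unfolding a_def a'_def d_def by simp
    moreover have "d > 0"
      unfolding d_def by (rule level_diam_pos)
    ultimately have "(max a a' + min a a' + d) / 2 \<in> {a<..<a + d} \<inter> {a'<..<a' + d}"
      by (auto simp: abs_if max_def min_def split: if_split_asm)
    then show False
      using interior_J_disjoint[OF assms] interiors by auto
  qed
qed

lemma card_level_meeting_ball_le:
  "card {\<sigma> \<in> words n k. J \<sigma> \<inter> ball x (level_diam k) \<noteq> {}} \<le> 4"
proof -
  define W where "W = {\<sigma> \<in> words n k. J \<sigma> \<inter> ball x (level_diam k) \<noteq> {}}"
  define R where "R = level_diam k"
  have R: "R > 0"
    unfolding R_def by (rule level_diam_pos)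
  have separated: "\<sigma> \<in> W \<Longrightarrow> \<tau> \<in> W \<Longrightarrow> \<sigma> \<noteq> \<tau> \<Longrightarrow> R \<le> \<bar>left_end \<sigma> - left_end \<tau>\<bar>" for \<sigma> \<tau>
    unfolding W_def R_def using left_end_separated by blast
  have "inj_on left_end W"
    using separated R by (fastforce intro: inj_onI)
  moreover have "card (left_end ` W) \<le> Suc 3"
  proof (rule card_separated_le[OF R])
    show "R \<le> \<bar>y - z\<bar>" if "y \<in> left_end ` W" "z \<in> left_end ` W" "y \<noteq> z" for y z
      using that separated by blast
    show "left_end ` W \<subseteq> {x - 2 * R .. x - 2 * R + real 3 * R}"
    proof
      fix z assume "z \<in> left_end ` W"
      then obtain \<sigma> y where \<sigma>: "z = left_end \<sigma>" "\<sigma> \<in> words n k" "y \<in> J \<sigma>" "dist x y < R"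
        by (fastforce simp: W_def R_def)
      then have "left_end \<sigma> \<le> y" "y \<le> left_end \<sigma> + R"
        using J_eq_interval[OF \<sigma>(2)] unfolding R_def by auto
      then show "z \<in> {x - 2 * R .. x - 2 * R + real 3 * R}"
        using \<sigma>(1,4) by (auto simp: dist_real_def)
    qed
  qed
  ultimately show ?thesis
    unfolding W_def[symmetric] by (simp add: card_image)
qed

lemma covering_number_ball_le:
  assumes l: "l \<ge> 1"
  shows "covering_number (level_diam (k + l)) (ball x (level_diam k) \<inter> moran_set n J)
    \<le> 4 * (\<Prod>j\<in>{k+1..k+l}. n j)"
proof -
  define r where "r = level_diam (k + l)"
  define W where "W = {\<sigma> \<in> words n k. J \<sigma> \<inter> ball x (level_diam k) \<noteq> {}}"
  define T where "T = {\<tau> \<in> words n (k + l). take k \<tau> \<in> W}"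
  have finite_T: "finite T"
    unfolding T_def using finite_words by simp
  have "card T \<le> card W * (\<Prod>j\<in>{k+1..k+l}. n j)"
    unfolding T_def by (rule card_words_prefix_in_le) (simp add: W_def finite_words)
  also have "\<dots> \<le> 4 * (\<Prod>j\<in>{k+1..k+l}. n j)"
    using card_level_meeting_ball_le[of k x] unfolding W_def by simp
  finally have card_T: "card T \<le> 4 * (\<Prod>j\<in>{k+1..k+l}. n j)" .
  have "ball x (level_diam k) \<inter> moran_set n J \<subseteq> (\<Union>z\<in>(\<lambda>\<tau>. left_end \<tau> + r / 2) ` T. ball z r)"
  proof
    fix y assume y: "y \<in> ball x (level_diam k) \<inter> moran_set n J"
    then obtain \<tau> where \<tau>: "\<tau> \<in> words n (k + l)" "y \<in> J \<tau>"
      using moran_set_in_level[of y n J "k + l"] l by auto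
    then have "take k \<tau> \<in> W"
      using J_subset_prefix take_in_words y unfolding W_def by blast
    then have "\<tau> \<in> T"
      using \<tau>(1) unfolding T_def by simp
    have "left_end \<tau> \<le> y" "y \<le> left_end \<tau> + r"
      using \<tau> J_eq_interval unfolding r_def by auto
    then have "y \<in> ball (left_end \<tau> + r / 2) r"
      using level_diam_pos[of "k + l"] unfolding r_def by (auto simp: dist_real_def)
    with \<open>\<tau> \<in> T\<close> show "y \<in> (\<Union>z\<in>(\<lambda>\<tau>. left_end \<tau> + r / 2) ` T. ball z r)"
      by blast
  qed
  then have "covering_number r (ball x (level_diam k) \<inter> moran_set n J)
      \<le> card ((\<lambda>\<tau>. left_end \<tau> + r / 2) ` T)"
    using finite_T by (intro covering_number_le_card) simp_all
  also have "\<dots> \<le> card T"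
    by (rule card_image_le[OF finite_T])
  finally show ?thesis
    unfolding r_def using card_T by linarith
qed

lemma moran_set_nonempty: "moran_set n J \<noteq> {}"
proof -
  define F where "F k = J (replicate k 1)" for k
  have in_words: "replicate k 1 \<in> words n k" for k
    by (rule replicate_in_words) (use n_ge in force)
  have "compact (F k)" "F k \<noteq> {}" for k
    using J_closed_interval[OF in_words[of k]] unfolding F_def by auto
  moreover have step: "F (Suc k) \<subseteq> F k" for k
    using J_snoc_subset[OF in_words[of k], of 1] n_ge[of "Suc k"]
    unfolding F_def by (simp add: replicate_append_same[symmetric])
  have "F k \<subseteq> F m" if "m \<le> k" for m k
    by (rule lift_Suc_antimono_le[of F, OF step that])
  ultimately obtain p where "p \<in> \<Inter>(range F)"
    using compact_nest[of F] by blast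
  then have "p \<in> moran_set n J"
    unfolding moran_set_def F_def using in_words by blast
  then show ?thesis by blast
qed

lemma ln_prod_n_window: "ln (real (\<Prod>j\<in>{k+1..k+l}. n j)) = (\<Sum>j\<in>{k+1..k+l}. ln (real (n j)))"
  using ln_prod_window[of "\<lambda>j. real (n j)" k l] n_ge by force

lemma ln_prod_c_window: "ln (\<Prod>j\<in>{k+1..k+l}. c j) = (\<Sum>j\<in>{k+1..k+l}. ln (c j))"
  using ln_prod_window[of c k l] c_pos by blast

lemma lower_dim_window_bound:
  assumes b: "b > 0" and C: "C > 0"
    and lower: "\<And>r R x. 0 < r \<Longrightarrow> r < R \<Longrightarrow> R < b \<Longrightarrow> x \<in> moran_set n J \<Longrightarrow>
      C * (R / r) powr s \<le> real (covering_number r (ball x R \<inter> moran_set n J))"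
  obtains K where "\<And>k m. k \<ge> K \<Longrightarrow> m \<ge> 1 \<Longrightarrow>
    s * (\<Sum>j\<in>{k+1..k+m}. - ln (c j)) \<le> (\<Sum>j\<in>{k+1..k+m}. ln (real (n j))) + ln (4 / C)"
proof -
  obtain x where x: "x \<in> moran_set n J"
    using moran_set_nonempty by blast
  obtain K where K: "\<And>k. k \<ge> K \<Longrightarrow> level_diam k < b"
    using level_diam_eventually_less[OF b] by blast
  have "s * (\<Sum>j\<in>{k+1..k+m}. - ln (c j)) \<le> (\<Sum>j\<in>{k+1..k+m}. ln (real (n j))) + ln (4 / C)"
    if k: "k \<ge> K" and m: "m \<ge> 1" for k m
  proof -
    define P where "P = (\<Prod>j\<in>{k+1..k+m}. c j)"
    define N where "N = real (\<Prod>j\<in>{k+1..k+m}. n j)"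
    have P: "P > 0"
      unfolding P_def by (intro prod_pos) (use c_pos in auto)
    have "(\<Prod>j\<in>{k+1..k+m}. n j) > 0"
    proof (rule prod_pos)
      show "n j > 0" if "j \<in> {k+1..k+m}" for j
        using n_ge[of j] that by simp
    qed
    then have N: "N > 0"
      unfolding N_def by (simp only: of_nat_0_less_iff)
    have "C * (level_diam k / level_diam (k + m)) powr s
        \<le> real (covering_number (level_diam (k + m)) (ball x (level_diam k) \<inter> moran_set n J))"
      using lower level_diam_pos level_diam_less[of k "k + m"] K[OF k] x m by simp
    also have "\<dots> \<le> 4 * N"
      using covering_number_ball_le[OF m, of k x] unfolding N_def by linarith
    finally have "C * (1 / P) powr s \<le> 4 * N"
      using level_diam_add[of k m] level_diam_pos[of k] unfolding P_def by simp
    then have "ln C + s * - ln P \<le> ln 4 + ln N"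
      using C P N by (simp add: ln_mult ln_powr ln_div flip: ln_le_cancel_iff)
    then show ?thesis
      using C unfolding P_def N_def ln_prod_c_window ln_prod_n_window
      by (simp add: ln_div sum_negf algebra_simps)
  qed
  then show ?thesis
    using that by blast
qed

theorem lower_dim_le_liminf:
  "lower_dim (moran_set n J) \<le> liminf (\<lambda>l. INF k\<in>{1..}.
     ereal (ln (real (\<Prod>j\<in>{k+1..k+l}. n j)) / - ln (\<Prod>j\<in>{k+1..k+l}. c j)))"
proof -
  have ratio: "ln (real (\<Prod>j\<in>{k+1..k+l}. n j)) / - ln (\<Prod>j\<in>{k+1..k+l}. c j)
      = (\<Sum>j\<in>{k+1..k+l}. ln (real (n j))) / (\<Sum>j\<in>{k+1..k+l}. - ln (c j))" for k l
    unfolding ln_prod_c_window ln_prod_n_window by (simp add: sum_negf)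
  have ln_n: "ln (real (n j)) \<ge> 0" if "j \<ge> 1" for j
    using n_ge[OF that] by simp
  have ln_c: "- ln (c j) \<ge> ln 2" if "j \<ge> 1" for j
  proof -
    have "2 \<le> 1 / c j"
      using c_less_half[OF that] c_pos[OF that] by (simp add: le_divide_eq)
    then have "ln 2 \<le> ln (1 / c j)"
      by (rule ln_mono) simp
    then show ?thesis
      using c_pos[OF that] by (simp add: ln_div)
  qed
  show ?thesis
    unfolding lower_dim_def ratio
  proof (rule Sup_least, clarify)
    fix s b C :: real
    assume s: "s \<ge> 0" and b: "b > 0" and C: "C > 0" and lower: "\<forall>r R. 0 < r \<longrightarrow> r < R \<longrightarrow> R < b \<longrightarrow>
      (\<forall>x\<in>moran_set n J. C * (R / r) powr s \<le> real (covering_number r (ball x R \<inter> moran_set n J)))"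
    obtain K where window: "\<And>k m. k \<ge> K \<Longrightarrow> m \<ge> 1 \<Longrightarrow>
      s * (\<Sum>j\<in>{k+1..k+m}. - ln (c j)) \<le> (\<Sum>j\<in>{k+1..k+m}. ln (real (n j))) + ln (4 / C)"
      using lower_dim_window_bound[OF b C] lower by blast
    show "ereal s \<le> liminf (\<lambda>l. INF k\<in>{1..}. ereal
        ((\<Sum>j\<in>{k+1..k+l}. ln (real (n j))) / (\<Sum>j\<in>{k+1..k+l}. - ln (c j))))"
      by (rule liminf_window_ratio_ge[where \<beta> = "ln 2" and K = K and Q = "ln (4 / C)"])
         (use ln_n ln_c s window in auto)
  qed
qed

end

theorem theorem2:
  fixes n :: "nat \<Rightarrow> nat" and c :: "nat \<Rightarrow> real" and I E :: "real set"
  assumes n_ge: "\<And>k. k \<ge> 1 \<Longrightarrow> n k \<ge> 2"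
    and c_pos: "\<And>k. k \<ge> 1 \<Longrightarrow> c k > 0"
    and nc_lt: "\<And>k. k \<ge> 1 \<Longrightarrow> real (n k) * c k < 1"
    and I_int: "\<exists>a b. a \<le> b \<and> I = {a..b}"
    and E_in: "E \<in> moran_class I n c"
    and bdd: "bdd_above (n ` {1..})"
  shows "lower_dim E \<le>
    liminf (\<lambda>l. INF k\<in>{1..}. ereal (ln (real (\<Prod>j\<in>{k+1..k+l}. n j)) /
                                     - ln (\<Prod>j\<in>{k+1..k+l}. c j)))"
proof -
  obtain J where "homog_moran_structure I n c J" and E: "E = moran_set n J"
    using E_in unfolding moran_class_def by blast
  then interpret homog_moran I n c J
    using n_ge c_pos nc_lt by unfold_locales
  show ?thesis
    unfolding E by (rule lower_dim_le_liminf)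
qed

end
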